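(* Fix $t\in[0,1/2]$. Let $A,B,S,T\subset[n]$ be pairwise disjoint and let $F,G:\{0,1\}^n\times\{0,1\}^n\to\mathbb R$ be such that $F(\omega,\omega_t)$ is measurable with respect to $\{(\omega(x),\omega_t(x)):x\in A\cup S\cup T\}$, $G(\omega,\omega_t)$ is measurable with respect to $\{(\omega(x),\omega_t(x)):x\in B\cup S\cup T\}$, and $F,G$ are both $S$-increasing and $T$-decreasing. Then $$\mathbb E[F(\omega,\omega_t)G(\omega,\omega_t)]\ge\mathbb E[F(\omega,\omega_t)]\,\mathbb E[G(\omega,\omega_t)].$$
   Context: $\omega$ is uniform on $\{0,1\}^n$ and $\omega_t$ is obtained from $\omega$ by flipping each coordinate independently with probability $t$. $x^i$ (resp. $x_i$) is $x$ with $i$-th coordinate set to $1$ (resp. $0$). For $S\subset[n]$, $F$ is $S$-increasing if for all $x,y\in\{0,1\}^n$ and all $i\in S$: $F(x^i,y)\ge F(x_i,y)$ and $F(x,y^i)\ge F(x,y_i)$; $F$ is $T$-decreasing if for all $x,y$ and $i\in T$: $F(x^i,y)\le F(x_i,y)$ and $F(x,y^i)\le F(x,y_i)$. *)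

theory Defs
  imports "HOL-Analysis.Analysis"
begin

(* Configurations in {0,1}^n, with [n] = {1..n}: boolean functions on nat vanishing outside {1..n}
   (True = 1, False = 0). *)
definition cube :: "nat \<Rightarrow> (nat \<Rightarrow> bool) set" where
  "cube n = {x. \<forall>i. i \<notin> {1..n} \<longrightarrow> \<not> x i}"

(* Joint probability mass of (omega, omega_t): omega uniform, each coordinate flipped
   independently with probability t. *)
definition joint_pmf :: "nat \<Rightarrow> real \<Rightarrow> (nat \<Rightarrow> bool) \<Rightarrow> (nat \<Rightarrow> bool) \<Rightarrow> real" where
  "joint_pmf n t x y = (1/2)^n * (\<Prod>i\<in>{1..n}. if x i = y i then 1 - t else t)"

definition expect :: "nat \<Rightarrow> real \<Rightarrow> ((nat \<Rightarrow> bool) \<Rightarrow> (nat \<Rightarrow> bool) \<Rightarrow> real) \<Rightarrow> real" where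
  "expect n t H = (\<Sum>x\<in>cube n. \<Sum>y\<in>cube n. joint_pmf n t x y * H x y)"

(* H(omega, omega_t) is measurable w.r.t. {(omega(i), omega_t(i)) : i \<in> C}: on the support of
   (omega, omega_t), H depends only on the pairs of coordinates indexed by C. *)
definition depends_on :: "nat \<Rightarrow> real \<Rightarrow> nat set \<Rightarrow> ((nat \<Rightarrow> bool) \<Rightarrow> (nat \<Rightarrow> bool) \<Rightarrow> real) \<Rightarrow> bool" where
  "depends_on n t C H \<longleftrightarrow>
     (\<forall>x\<in>cube n. \<forall>y\<in>cube n. \<forall>x'\<in>cube n. \<forall>y'\<in>cube n.
        joint_pmf n t x y > 0 \<longrightarrow> joint_pmf n t x' y' > 0 \<longrightarrow>
        (\<forall>i\<in>C. x i = x' i \<and> y i = y' i) \<longrightarrow> H x y = H x' y')"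

definition S_increasing :: "nat \<Rightarrow> nat set \<Rightarrow> ((nat \<Rightarrow> bool) \<Rightarrow> (nat \<Rightarrow> bool) \<Rightarrow> real) \<Rightarrow> bool" where
  "S_increasing n S F \<longleftrightarrow>
     (\<forall>x\<in>cube n. \<forall>y\<in>cube n. \<forall>i\<in>S.
        F (x(i := True)) y \<ge> F (x(i := False)) y \<and> F x (y(i := True)) \<ge> F x (y(i := False)))"

definition T_decreasing :: "nat \<Rightarrow> nat set \<Rightarrow> ((nat \<Rightarrow> bool) \<Rightarrow> (nat \<Rightarrow> bool) \<Rightarrow> real) \<Rightarrow> bool" where
  "T_decreasing n T F \<longleftrightarrow>
     (\<forall>x\<in>cube n. \<forall>y\<in>cube n. \<forall>i\<in>T.
        F (x(i := True)) y \<le> F (x(i := False)) y \<and> F x (y(i := True)) \<le> F x (y(i := False)))"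

end

theory Submission
  imports Defs
begin

text \<open>Fixing the pair \<open>(\<omega>(j), \<omega>\<^sub>t(j)) = (a, b)\<close> and averaging
  over the remaining coordinates turns \<open>F\<close> and \<open>G\<close> into functions \<open>f, g\<close> on \<open>{0,1}\<^sup>2\<close>. For
  \<open>j \<in> S\<close> both are increasing, for \<open>j \<in> T\<close> both are decreasing, and otherwise \<open>j\<close> lies outside
  the coordinates seen by \<open>F\<close> or by \<open>G\<close>, so that \<open>f\<close> or \<open>g\<close> is constant. In each case
  \<open>E[fg] \<ge> E[f] E[g]\<close> for the law of a single pair, by an explicit four-point computation that
  needs \<open>t \<le> 1/2\<close>; the induction hypothesis handles the remaining coordinates.

  The hypotheses of the theorem hold only on the cube and on the support of the joint law, so
  \<open>F\<close> is first replaced by \<open>F (x|\<^sub>C) (y|\<^sub>C)\<close>, which coincides with \<open>F\<close> almost surely and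
  satisfies the hypotheses everywhere.\<close>

definition pair_weight :: "real \<Rightarrow> bool \<Rightarrow> bool \<Rightarrow> real" where
  "pair_weight t a b = (if a = b then (1 - t) / 2 else t / 2)"

definition pair_expect :: "real \<Rightarrow> (bool \<Rightarrow> bool \<Rightarrow> real) \<Rightarrow> real" where
  "pair_expect t f = (\<Sum>a\<in>UNIV. \<Sum>b\<in>UNIV. pair_weight t a b * f a b)"

definition mono_pair :: "(bool \<Rightarrow> bool \<Rightarrow> real) \<Rightarrow> bool" where
  "mono_pair f \<longleftrightarrow> (\<forall>b. f False b \<le> f True b) \<and> (\<forall>a. f a False \<le> f a True)"

definition const_pair :: "(bool \<Rightarrow> bool \<Rightarrow> real) \<Rightarrow> bool" where
  "const_pair f \<longleftrightarrow> (\<forall>a b. f a b = f False False)"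

lemma pair_weight_nonneg: "0 \<le> t \<Longrightarrow> t \<le> 1 \<Longrightarrow> 0 \<le> pair_weight t a b"
  by (simp add: pair_weight_def)

lemma pair_expect_mono:
  "0 \<le> t \<Longrightarrow> t \<le> 1 \<Longrightarrow> (\<And>a b. f a b \<le> g a b) \<Longrightarrow> pair_expect t f \<le> pair_expect t g"
  unfolding pair_expect_def by (intro sum_mono mult_left_mono pair_weight_nonneg)

lemma pair_expect_uminus: "pair_expect t (\<lambda>a b. - f a b) = - pair_expect t f"
  by (simp add: pair_expect_def UNIV_bool)

lemma pair_expect_const_mult: "pair_expect t (\<lambda>a b. c * g a b) = c * pair_expect t g"
  by (simp add: pair_expect_def UNIV_bool algebra_simps)

lemma pair_expect_const: "pair_expect t (\<lambda>a b. c) = c"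
  by (simp add: pair_expect_def UNIV_bool pair_weight_def algebra_simps)

text \<open>For comonotone \<open>f, g\<close> both edge terms of the covariance below are nonnegative, so only
  the signs of the weighted diagonal increments \<open>pair_drift\<close> matter.\<close>

definition pair_drift :: "real \<Rightarrow> (bool \<Rightarrow> bool \<Rightarrow> real) \<Rightarrow> real" where
  "pair_drift t f = (1 - t) * (f True True - f False False) + t * (f True False - f False True)"

lemma pair_covariance:
  "pair_expect t (\<lambda>a b. f a b * g a b) - pair_expect t f * pair_expect t g
     = t * (1 - t) / 2 * ((f False True - f False False) * (g False True - g False False)
                        + (f True True - f True False) * (g True True - g True False))
       + pair_drift t f * pair_drift t g / 4"
  by (simp add: pair_expect_def UNIV_bool pair_weight_def pair_drift_def field_simps)

text \<open>Splitting the diagonal increment along edges, the middle edge gets weight \<open>1 - 2t\<close>: this is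
  where \<open>t \<le> 1/2\<close> is needed.\<close>
lemma pair_drift_nonneg:
  assumes "0 \<le> t" "t \<le> 1/2" "mono_pair f"
  shows "0 \<le> pair_drift t f"
proof -
  have "pair_drift t f = (1 - t) * (f True True - f False True)
      + (1 - 2 * t) * (f False True - f False False) + t * (f True False - f False False)"
    by (simp add: pair_drift_def algebra_simps)
  moreover have "0 \<le> (1 - t) * (f True True - f False True)"
    "0 \<le> (1 - 2 * t) * (f False True - f False False)" "0 \<le> t * (f True False - f False False)"
    using assms by (auto simp: mono_pair_def)
  ultimately show ?thesis by linarith
qed

lemma pair_expect_mult_ge_mono:
  assumes "0 \<le> t" "t \<le> 1/2" "mono_pair f" "mono_pair g"
  shows "pair_expect t f * pair_expect t g \<le> pair_expect t (\<lambda>a b. f a b * g a b)"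
proof -
  have "0 \<le> t * (1 - t) / 2 * ((f False True - f False False) * (g False True - g False False)
      + (f True True - f True False) * (g True True - g True False))
      + pair_drift t f * pair_drift t g / 4"
    using assms pair_drift_nonneg[OF assms(1,2)]
    by (intro add_nonneg_nonneg mult_nonneg_nonneg divide_nonneg_pos) (auto simp: mono_pair_def)
  then show ?thesis using pair_covariance[of t f g] by linarith
qed

lemma pair_expect_mult_ge:
  assumes "0 \<le> t" "t \<le> 1/2"
    and "(mono_pair f \<and> mono_pair g)
      \<or> (mono_pair (\<lambda>a b. - f a b) \<and> mono_pair (\<lambda>a b. - g a b)) \<or> const_pair f \<or> const_pair g"
  shows "pair_expect t f * pair_expect t g \<le> pair_expect t (\<lambda>a b. f a b * g a b)"
  using assms(3)
proof (elim disjE conjE)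
  assume "mono_pair (\<lambda>a b. - f a b)" "mono_pair (\<lambda>a b. - g a b)"
  from pair_expect_mult_ge_mono[OF assms(1,2) this] show ?thesis
    by (simp add: pair_expect_uminus)
next
  assume "const_pair f"
  then obtain c where "f = (\<lambda>_ _. c)" unfolding const_pair_def fun_eq_iff by blast
  then show ?thesis by (simp add: pair_expect_const pair_expect_const_mult)
next
  assume "const_pair g"
  then obtain c where "g = (\<lambda>_ _. c)" unfolding const_pair_def fun_eq_iff by blast
  then show ?thesis by (simp add: pair_expect_const pair_expect_const_mult mult.commute[of _ c])
qed (rule pair_expect_mult_ge_mono[OF assms(1,2)])

definition cube_on :: "nat set \<Rightarrow> (nat \<Rightarrow> bool) set" where
  "cube_on I = {x. \<forall>i. i \<notin> I \<longrightarrow> \<not> x i}"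

definition expect_on ::
    "real \<Rightarrow> nat set \<Rightarrow> ((nat \<Rightarrow> bool) \<Rightarrow> (nat \<Rightarrow> bool) \<Rightarrow> real) \<Rightarrow> real" where
  "expect_on t I H =
     (\<Sum>x\<in>cube_on I. \<Sum>y\<in>cube_on I. (\<Prod>i\<in>I. pair_weight t (x i) (y i)) * H x y)"

definition fix_coord :: "nat \<Rightarrow> bool \<Rightarrow> bool \<Rightarrow>
    ((nat \<Rightarrow> bool) \<Rightarrow> (nat \<Rightarrow> bool) \<Rightarrow> real) \<Rightarrow> (nat \<Rightarrow> bool) \<Rightarrow> (nat \<Rightarrow> bool) \<Rightarrow> real" where
  "fix_coord j a b H = (\<lambda>x y. H (x(j := a)) (y(j := b)))"

definition coord_increasing ::
    "nat set \<Rightarrow> ((nat \<Rightarrow> bool) \<Rightarrow> (nat \<Rightarrow> bool) \<Rightarrow> real) \<Rightarrow> bool" where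
  "coord_increasing S H \<longleftrightarrow> (\<forall>x y. \<forall>i\<in>S.
     H (x(i := False)) y \<le> H (x(i := True)) y \<and> H x (y(i := False)) \<le> H x (y(i := True)))"

definition depends_only_on ::
    "nat set \<Rightarrow> ((nat \<Rightarrow> bool) \<Rightarrow> (nat \<Rightarrow> bool) \<Rightarrow> real) \<Rightarrow> bool" where
  "depends_only_on C H \<longleftrightarrow> (\<forall>x y i a b. i \<notin> C \<longrightarrow> H (x(i := a)) (y(i := b)) = H x y)"

lemma cube_on_empty: "cube_on {} = {\<lambda>_. False}"
  by (auto simp: cube_on_def)

lemma cube_on_insert:
  assumes "j \<notin> I"
  shows "bij_betw (\<lambda>(a, x). x(j := a)) (UNIV \<times> cube_on I) (cube_on (insert j I))"
proof (rule bij_betw_byWitness[where f' = "\<lambda>x. (x j, x(j := False))"])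
  show "\<forall>z\<in>UNIV \<times> cube_on I. (\<lambda>x. (x j, x(j := False))) ((\<lambda>(a, x). x(j := a)) z) = z"
    using assms by (auto simp: cube_on_def fun_eq_iff)
qed (auto simp: cube_on_def split: if_splits)

lemma sum_cube_on_insert:
  assumes "j \<notin> I"
  shows "(\<Sum>x\<in>cube_on (insert j I). h x) = (\<Sum>a\<in>UNIV. \<Sum>x\<in>cube_on I. h (x(j := a)))"
  by (simp add: sum.reindex_bij_betw[OF cube_on_insert[OF assms], symmetric]
      sum.cartesian_product split_def)

lemma expect_on_empty: "expect_on t {} H = H (\<lambda>_. False) (\<lambda>_. False)"
  by (simp add: expect_on_def cube_on_empty)

lemma expect_on_insert:
  assumes "finite I" "j \<notin> I"
  shows "expect_on t (insert j I) H = pair_expect t (\<lambda>a b. expect_on t I (fix_coord j a b H))"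
proof -
  have weight: "(\<Prod>i\<in>insert j I. pair_weight t ((x(j := a)) i) ((y(j := b)) i))
      = pair_weight t a b * (\<Prod>i\<in>I. pair_weight t (x i) (y i))" for x y a b
  proof -
    have "(\<Prod>i\<in>I. pair_weight t ((x(j := a)) i) ((y(j := b)) i)) = (\<Prod>i\<in>I. pair_weight t (x i) (y i))"
      using assms(2) by (intro prod.cong) auto
    then show ?thesis using assms by simp
  qed
  have "expect_on t (insert j I) H = (\<Sum>a\<in>UNIV. \<Sum>b\<in>UNIV. \<Sum>x\<in>cube_on I. \<Sum>y\<in>cube_on I.
      pair_weight t a b * ((\<Prod>i\<in>I. pair_weight t (x i) (y i)) * H (x(j := a)) (y(j := b))))"
    unfolding expect_on_def sum_cube_on_insert[OF assms(2)] weight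
    by (simp add: mult.assoc sum.swap[of _ "cube_on I" UNIV])
  then show ?thesis
    by (simp add: pair_expect_def expect_on_def fix_coord_def sum_distrib_left)
qed

lemma expect_on_mono:
  assumes "0 \<le> t" "t \<le> 1" "\<And>x y. H x y \<le> K x y"
  shows "expect_on t I H \<le> expect_on t I K"
  unfolding expect_on_def by (intro sum_mono mult_left_mono assms prod_nonneg pair_weight_nonneg)

lemma expect_on_uminus: "expect_on t I (\<lambda>x y. - H x y) = - expect_on t I H"
  by (simp add: expect_on_def sum_negf)

lemma fix_coord_uminus: "fix_coord j a b (\<lambda>x y. - H x y) = (\<lambda>x y. - fix_coord j a b H x y)"
  by (simp add: fix_coord_def)

lemma fix_coord_mult: "fix_coord j a b (\<lambda>x y. F x y * G x y)
    = (\<lambda>x y. fix_coord j a b F x y * fix_coord j a b G x y)"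
  by (simp add: fix_coord_def)

lemma coord_increasing_fix_coord:
  assumes "coord_increasing S H"
  shows "coord_increasing S (fix_coord j a b H)"
  unfolding coord_increasing_def fix_coord_def
proof (intro allI ballI)
  fix x y i assume "i \<in> S"
  then show "H (x(i := False, j := a)) (y(j := b)) \<le> H (x(i := True, j := a)) (y(j := b)) \<and>
      H (x(j := a)) (y(i := False, j := b)) \<le> H (x(j := a)) (y(i := True, j := b))"
  proof (cases "i = j")
    case False
    then have "x(i := False, j := a) = x(j := a, i := False)" "x(i := True, j := a) = x(j := a, i := True)"
      "y(i := False, j := b) = y(j := b, i := False)" "y(i := True, j := b) = y(j := b, i := True)"
      by (simp_all add: fun_upd_twist)
    then show ?thesis using assms \<open>i \<in> S\<close> unfolding coord_increasing_def by simp
  qed simp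
qed

lemma depends_only_on_fix_coord:
  assumes "depends_only_on C H"
  shows "depends_only_on C (fix_coord j a b H)"
  unfolding depends_only_on_def fix_coord_def
proof (intro allI impI)
  fix x y i c d assume "i \<notin> C"
  then show "H (x(i := c, j := a)) (y(i := d, j := b)) = H (x(j := a)) (y(j := b))"
  proof (cases "i = j")
    case False
    then have "x(i := c, j := a) = x(j := a, i := c)" "y(i := d, j := b) = y(j := b, i := d)"
      by (simp_all add: fun_upd_twist)
    then show ?thesis using assms \<open>i \<notin> C\<close> unfolding depends_only_on_def by simp
  qed simp
qed

lemma fix_coord_eq_self: "depends_only_on C H \<Longrightarrow> j \<notin> C \<Longrightarrow> fix_coord j a b H = H"
  unfolding depends_only_on_def fix_coord_def by (simp add: fun_eq_iff)

lemma mono_pair_expect_on_fix_coord: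
  assumes "0 \<le> t" "t \<le> 1" "coord_increasing S H" "j \<in> S"
  shows "mono_pair (\<lambda>a b. expect_on t I (fix_coord j a b H))"
  using assms unfolding mono_pair_def fix_coord_def coord_increasing_def
  by (auto intro!: expect_on_mono)

lemma expect_on_mult_ge:
  assumes "finite I" "0 \<le> t" "t \<le> 1/2" "C \<inter> D \<subseteq> S \<union> T"
    and "coord_increasing S F" "coord_increasing T (\<lambda>x y. - F x y)" "depends_only_on C F"
    and "coord_increasing S G" "coord_increasing T (\<lambda>x y. - G x y)" "depends_only_on D G"
  shows "expect_on t I F * expect_on t I G \<le> expect_on t I (\<lambda>x y. F x y * G x y)"
  using assms(1,5-)
proof (induction I arbitrary: F G rule: finite_induct)
  case empty
  then show ?case by (simp add: expect_on_empty)
next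
  case (insert j I)
  have t: "0 \<le> t" "t \<le> 1" using assms(2,3) by simp_all
  define f where "f = (\<lambda>a b. expect_on t I (fix_coord j a b F))"
  define g where "g = (\<lambda>a b. expect_on t I (fix_coord j a b G))"
  consider "j \<in> S" | "j \<in> T" | "j \<notin> C" | "j \<notin> D" using assms(4) by blast
  then have "(mono_pair f \<and> mono_pair g)
      \<or> (mono_pair (\<lambda>a b. - f a b) \<and> mono_pair (\<lambda>a b. - g a b)) \<or> const_pair f \<or> const_pair g"
  proof cases
    case 1
    then show ?thesis
      using mono_pair_expect_on_fix_coord[OF t] insert.prems unfolding f_def g_def by blast
  next
    case 2
    have "mono_pair (\<lambda>a b. - f a b)" "mono_pair (\<lambda>a b. - g a b)"
      using mono_pair_expect_on_fix_coord[OF t insert.prems(2) 2]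
        mono_pair_expect_on_fix_coord[OF t insert.prems(5) 2]
      by (simp_all add: f_def g_def fix_coord_uminus expect_on_uminus)
    then show ?thesis by blast
  next
    case 3
    then show ?thesis using insert.prems by (simp add: const_pair_def f_def fix_coord_eq_self)
  next
    case 4
    then show ?thesis using insert.prems by (simp add: const_pair_def g_def fix_coord_eq_self)
  qed
  then have "pair_expect t f * pair_expect t g \<le> pair_expect t (\<lambda>a b. f a b * g a b)"
    by (rule pair_expect_mult_ge[OF assms(2,3)])
  also have "\<dots> \<le> pair_expect t (\<lambda>a b. expect_on t I (fix_coord j a b (\<lambda>x y. F x y * G x y)))"
    unfolding f_def g_def fix_coord_mult
    using insert.prems coord_increasing_fix_coord[of T "\<lambda>x y. - F x y"]
      coord_increasing_fix_coord[of T "\<lambda>x y. - G x y"]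
    by (intro pair_expect_mono[OF t] insert.IH coord_increasing_fix_coord depends_only_on_fix_coord)
      (simp_all add: fix_coord_uminus)
  finally show ?case
    using insert.hyps by (simp add: expect_on_insert f_def g_def)
qed

lemma joint_pmf_eq_prod: "joint_pmf n t x y = (\<Prod>i\<in>{1..n}. pair_weight t (x i) (y i))"
proof -
  have "(\<Prod>i\<in>{1..n}. pair_weight t (x i) (y i))
      = (\<Prod>i\<in>{1..n}. 1/2 * (if x i = y i then 1 - t else t))"
    by (intro prod.cong) (auto simp: pair_weight_def)
  also have "\<dots> = (1/2)^n * (\<Prod>i\<in>{1..n}. if x i = y i then 1 - t else t)"
    unfolding prod.distrib by simp
  finally show ?thesis by (simp add: joint_pmf_def)
qed

lemma expect_eq_expect_on: "expect n t H = expect_on t {1..n} H"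
proof -
  have "cube n = cube_on {1..n}" by (simp add: cube_def cube_on_def)
  then show ?thesis by (simp add: expect_def expect_on_def joint_pmf_eq_prod)
qed

lemma expect_cong_support:
  assumes "0 \<le> t" "t \<le> 1"
    and "\<And>x y. x \<in> cube n \<Longrightarrow> y \<in> cube n \<Longrightarrow> 0 < joint_pmf n t x y \<Longrightarrow> H x y = K x y"
  shows "expect n t H = expect n t K"
  unfolding expect_def
proof (intro sum.cong refl)
  fix x y assume "x \<in> cube n" "y \<in> cube n"
  moreover have "0 \<le> joint_pmf n t x y"
    using assms(1,2) by (simp add: joint_pmf_eq_prod prod_nonneg pair_weight_nonneg)
  ultimately show "joint_pmf n t x y * H x y = joint_pmf n t x y * K x y"
    using assms(3) by (cases "joint_pmf n t x y = 0") auto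
qed

definition restrict_coords :: "nat set \<Rightarrow> (nat \<Rightarrow> bool) \<Rightarrow> nat \<Rightarrow> bool" where
  "restrict_coords C x = (\<lambda>i. i \<in> C \<and> x i)"

lemma restrict_coords_in_cube: "C \<subseteq> {1..n} \<Longrightarrow> restrict_coords C x \<in> cube n"
  by (auto simp: restrict_coords_def cube_def)

lemma restrict_coords_upd_in: "i \<in> C \<Longrightarrow> restrict_coords C (x(i := a)) = (restrict_coords C x)(i := a)"
  by (auto simp: restrict_coords_def fun_eq_iff)

lemma restrict_coords_upd_out: "i \<notin> C \<Longrightarrow> restrict_coords C (x(i := a)) = restrict_coords C x"
  by (auto simp: restrict_coords_def fun_eq_iff)

lemma coord_increasing_restrict:
  assumes "S_increasing n S F" "S \<subseteq> C" "C \<subseteq> {1..n}"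
  shows "coord_increasing S (\<lambda>x y. F (restrict_coords C x) (restrict_coords C y))"
  using assms restrict_coords_in_cube[OF assms(3)]
  unfolding coord_increasing_def S_increasing_def by (auto simp: restrict_coords_upd_in subsetD)

lemma coord_decreasing_restrict:
  assumes "T_decreasing n T F" "T \<subseteq> C" "C \<subseteq> {1..n}"
  shows "coord_increasing T (\<lambda>x y. - F (restrict_coords C x) (restrict_coords C y))"
  using assms restrict_coords_in_cube[OF assms(3)]
  unfolding coord_increasing_def T_decreasing_def by (auto simp: restrict_coords_upd_in subsetD)

lemma depends_only_on_restrict:
  "depends_only_on C (\<lambda>x y. F (restrict_coords C x) (restrict_coords C y))"
  by (simp add: depends_only_on_def restrict_coords_upd_out)

lemma pair_weight_pos_iff:
  "0 \<le> t \<Longrightarrow> t \<le> 1/2 \<Longrightarrow> 0 < pair_weight t a b \<longleftrightarrow> a = b \<or> 0 < t"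
  by (simp add: pair_weight_def)

text \<open>Restriction keeps a pair in the support: off \<open>C\<close> both coordinates become \<open>0\<close>,
  and equal coordinates always have positive weight.\<close>
lemma joint_pmf_restrict_pos:
  assumes "0 \<le> t" "t \<le> 1/2" "0 < joint_pmf n t x y"
  shows "0 < joint_pmf n t (restrict_coords C x) (restrict_coords C y)"
proof -
  have "0 < pair_weight t (x i) (y i)" if "i \<in> {1..n}" for i
  proof -
    have "pair_weight t (x i) (y i) \<noteq> 0"
    proof
      assume "pair_weight t (x i) (y i) = 0"
      then have "joint_pmf n t x y = 0"
        unfolding joint_pmf_eq_prod using that by (intro prod_zero) auto
      with assms(3) show False by simp
    qed
    moreover have "0 \<le> pair_weight t (x i) (y i)" using assms(1,2) by (simp add: pair_weight_nonneg)
    ultimately show ?thesis by simp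
  qed
  then have "0 < pair_weight t (restrict_coords C x i) (restrict_coords C y i)" if "i \<in> {1..n}" for i
    using that assms(1,2) by (auto simp: pair_weight_pos_iff restrict_coords_def)
  then show ?thesis unfolding joint_pmf_eq_prod by (rule prod_pos)
qed

lemma depends_on_restrict_eq:
  assumes "depends_on n t C F" "C \<subseteq> {1..n}" "0 \<le> t" "t \<le> 1/2"
    and "x \<in> cube n" "y \<in> cube n" "0 < joint_pmf n t x y"
  shows "F x y = F (restrict_coords C x) (restrict_coords C y)"
proof -
  have "\<forall>i\<in>C. x i = restrict_coords C x i \<and> y i = restrict_coords C y i"
    by (simp add: restrict_coords_def)
  then show ?thesis
    using assms(1,5-7) joint_pmf_restrict_pos[OF assms(3,4,7)] restrict_coords_in_cube[OF assms(2)]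
    unfolding depends_on_def by blast
qed

theorem proposition3:
  fixes n :: nat and t :: real and A B S T :: "nat set"
    and F G :: "(nat \<Rightarrow> bool) \<Rightarrow> (nat \<Rightarrow> bool) \<Rightarrow> real"
  assumes t: "0 \<le> t" "t \<le> 1/2"
    and sub: "A \<subseteq> {1..n}" "B \<subseteq> {1..n}" "S \<subseteq> {1..n}" "T \<subseteq> {1..n}"
    and disj: "A \<inter> B = {}" "A \<inter> S = {}" "A \<inter> T = {}"
              "B \<inter> S = {}" "B \<inter> T = {}" "S \<inter> T = {}"
    and measF: "depends_on n t (A \<union> S \<union> T) F"
    and measG: "depends_on n t (B \<union> S \<union> T) G"
    and monF: "S_increasing n S F" "T_decreasing n T F"
    and monG: "S_increasing n S G" "T_decreasing n T G"
  shows "expect n t (\<lambda>x y. F x y * G x y) \<ge> expect n t F * expect n t G"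
proof -
  define C D where "C = A \<union> S \<union> T" and "D = B \<union> S \<union> T"
  define F' where "F' = (\<lambda>x y. F (restrict_coords C x) (restrict_coords C y))"
  define G' where "G' = (\<lambda>x y. G (restrict_coords D x) (restrict_coords D y))"
  have CD: "C \<subseteq> {1..n}" "D \<subseteq> {1..n}" "C \<inter> D \<subseteq> S \<union> T"
    using sub disj(1) by (auto simp: C_def D_def)
  have t1: "t \<le> 1" using t by simp
  have FG_eq: "F x y = F' x y" "G x y = G' x y"
    if "x \<in> cube n" "y \<in> cube n" "0 < joint_pmf n t x y" for x y
    unfolding F'_def G'_def
    by (rule depends_on_restrict_eq[OF measF[folded C_def] CD(1) t that],
        rule depends_on_restrict_eq[OF measG[folded D_def] CD(2) t that])
  have expect_eqs: "expect n t F = expect n t F'" "expect n t G = expect n t G'"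
    "expect n t (\<lambda>x y. F x y * G x y) = expect n t (\<lambda>x y. F' x y * G' x y)"
    by (rule expect_cong_support[OF t(1) t1], simp add: FG_eq)+
  have "S \<subseteq> C" "T \<subseteq> C" "S \<subseteq> D" "T \<subseteq> D" by (auto simp: C_def D_def)
  then have "coord_increasing S F'" "coord_increasing T (\<lambda>x y. - F' x y)" "depends_only_on C F'"
    "coord_increasing S G'" "coord_increasing T (\<lambda>x y. - G' x y)" "depends_only_on D G'"
    unfolding F'_def G'_def
    using coord_increasing_restrict[OF monF(1) _ CD(1)] coord_decreasing_restrict[OF monF(2) _ CD(1)]
      coord_increasing_restrict[OF monG(1) _ CD(2)] coord_decreasing_restrict[OF monG(2) _ CD(2)]
    by (simp_all add: depends_only_on_restrict)
  then have "expect_on t {1..n} F' * expect_on t {1..n} G'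
      \<le> expect_on t {1..n} (\<lambda>x y. F' x y * G' x y)"
    by (rule expect_on_mult_ge[OF finite_atLeastAtMost t CD(3)])
  then show ?thesis unfolding expect_eqs unfolding expect_eq_expect_on .
qed

end
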